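(* For integers $m\ge 1$ and $n\ge 0$, define $$\mathcal{C}_{m,n}= m!\left(\prod_{i=1}^{m}\frac{1}{n+i}\right)\binom{(m+1)n}{n,n,\dots,n}=\binom{m+n}{n}^{-1}\binom{(m+1)n}{n,n,\dots,n},$$ where the multinomial coefficient has $m+1$ lower entries all equal to $n$, i.e. equals $\frac{((m+1)n)!}{(n!)^{m+1}}$. Then $\mathcal{C}_{m,n}$ is an integer.
   Context: For $m=1$, $\mathcal{C}_{1,n}$ is the $n$-th Catalan number $\frac{1}{n+1}\binom{2n}{n}$. *)

theory Defs
  imports Complex_Main
begin

definition gen_catalan :: "nat \<Rightarrow> nat \<Rightarrow> rat" where
  "gen_catalan m n =
     of_nat (fact m) * (\<Prod>i=1..m. 1 / of_nat (n + i))
       * (of_nat (fact ((m + 1) * n)) / of_nat (fact n ^ (m + 1)))"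

end

theory Submission imports Defs "HOL-Computational_Algebra.Primes" begin

text \<open>Clearing denominators, the claim is that (n!)^m (m+n)! divides ((m+1)n)! m!. By Legendre's
  formula v_p(k!) = \<Sum>_j \<lfloor>k/p^j\<rfloor>, it suffices that for every q \<ge> 1
    m\<lfloor>n/q\<rfloor> + \<lfloor>(m+n)/q\<rfloor> \<le> \<lfloor>(m+1)n/q\<rfloor> + \<lfloor>m/q\<rfloor>.
  If q divides n this is an equality; otherwise n mod q \<ge> 1 gives
  (m+1)n \<ge> (m+n) + mq\<lfloor>n/q\<rfloor>, which yields the inequality even without the term \<lfloor>m/q\<rfloor>.\<close>

lemma multiplicity_le_self_nat:
  assumes "(p::nat) > 1" "x > 0"
  shows "multiplicity p x \<le> x"
proof -
  let ?k = "multiplicity p x"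
  have "?k < 2 ^ ?k" by (rule less_exp)
  also have "\<dots> \<le> p ^ ?k" using assms(1) by (simp add: power_mono)
  also have "\<dots> \<le> x" using assms(2) by (simp add: multiplicity_dvd dvd_imp_le)
  finally show ?thesis by simp
qed

lemma multiplicity_eq_card_prime_power_divisors:
  assumes "prime (p::nat)" "x > 0" "x \<le> N"
  shows "multiplicity p x = card {j\<in>{1..N}. p ^ j dvd x}"
proof -
  have "x \<noteq> 0" "\<not> is_unit p" using assms(2) prime_gt_1_nat[OF assms(1)] by simp_all
  note power_dvd_iff = power_dvd_iff_le_multiplicity[OF this]
  have "multiplicity p x \<le> N"
    using multiplicity_le_self_nat[OF prime_gt_1_nat[OF assms(1)] assms(2)] assms(3) by linarith
  then have "{j\<in>{1..N}. p ^ j dvd x} = {1..multiplicity p x}"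
    unfolding power_dvd_iff by auto
  then show ?thesis by simp
qed

lemma Suc_div_eq_div_add_dvd:
  "0 < (d::nat) \<Longrightarrow> Suc k div d = k div d + (if d dvd Suc k then 1 else 0)"
  by (simp add: div_Suc mod_eq_0_iff_dvd)

lemma multiplicity_fact_eq_sum_div:
  assumes "prime (p::nat)" "k \<le> N"
  shows "multiplicity p (fact k :: nat) = (\<Sum>j=1..N. k div p ^ j)"
  using assms(2)
proof (induction k)
  case 0
  then show ?case by simp
next
  case (Suc k)
  have p_pow_pos: "0 < p ^ j" for j using assms(1) by (simp add: prime_gt_0_nat)
  have "multiplicity p (fact (Suc k) :: nat) = multiplicity p (Suc k) + multiplicity p (fact k :: nat)"
    using assms(1) prime_elem_multiplicity_mult_distrib[of p "Suc k" "fact k :: nat"]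
    by (simp only: fact_Suc of_nat_id) simp
  also have "\<dots> = card {j\<in>{1..N}. p ^ j dvd Suc k} + (\<Sum>j=1..N. k div p ^ j)"
    using Suc multiplicity_eq_card_prime_power_divisors[OF assms(1), of "Suc k" N] by simp
  also have "card {j\<in>{1..N}. p ^ j dvd Suc k} = (\<Sum>j=1..N. if p ^ j dvd Suc k then 1 else 0)"
    by (simp add: sum.inter_filter[symmetric])
  also have "\<dots> + (\<Sum>j=1..N. k div p ^ j) = (\<Sum>j=1..N. Suc k div p ^ j)"
    by (simp add: Suc_div_eq_div_add_dvd[OF p_pow_pos] sum.distrib)
  finally show ?case .
qed

lemma mult_div_add_div_le:
  assumes "(q::nat) > 0"
  shows "m * (n div q) + (m + n) div q \<le> ((m + 1) * n) div q + m div q"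
proof (cases "q dvd n")
  case True
  then obtain a where n: "n = q * a" ..
  have "(m + q * a) div q = m div q + a" "((m + 1) * (q * a)) div q = (m + 1) * a"
    "(q * a) div q = a"
    using assms by simp_all
  then show ?thesis using n by (simp add: algebra_simps)
next
  case False
  have "m + n + m * (n div q) * q \<le> (m + 1) * n"
  proof -
    have "(m + 1) * n = m * (n div q * q + n mod q) + n" by simp
    then have "(m + 1) * n = m * (n div q) * q + m * (n mod q) + n"
      by (simp only: distrib_left mult.assoc)
    moreover have "m \<le> m * (n mod q)" using False by (simp add: dvd_eq_mod_eq_0)
    ultimately show ?thesis by linarith
  qed
  then have "(m + n + m * (n div q) * q) div q \<le> ((m + 1) * n) div q" by (rule div_le_mono)
  moreover have "(m + n + m * (n div q) * q) div q = (m + n) div q + m * (n div q)"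
    using assms by simp
  ultimately show ?thesis by linarith
qed

lemma fact_pow_mult_fact_dvd:
  "fact n ^ m * fact (m + n) dvd (fact ((m + 1) * n) * fact m :: nat)"
proof (rule multiplicity_le_imp_dvd)
  show "fact n ^ m * fact (m + n) \<noteq> (0::nat)" by simp
  fix p :: nat
  assume p: "prime p"
  define N where "N = (m + 1) * n + m + n"
  have "multiplicity p (fact n ^ m * fact (m + n) :: nat)
          = m * multiplicity p (fact n :: nat) + multiplicity p (fact (m + n) :: nat)"
    using p by (simp add: prime_elem_multiplicity_mult_distrib prime_elem_multiplicity_power_distrib)
  also have "\<dots> = (\<Sum>j=1..N. m * (n div p ^ j) + (m + n) div p ^ j)"
    using multiplicity_fact_eq_sum_div[OF p, of n N] multiplicity_fact_eq_sum_div[OF p, of "m + n" N]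
    by (simp add: N_def sum.distrib sum_distrib_left)
  also have "\<dots> \<le> (\<Sum>j=1..N. ((m + 1) * n) div p ^ j + m div p ^ j)"
    using p by (intro sum_mono mult_div_add_div_le) (simp add: prime_gt_0_nat)
  also have "\<dots> = multiplicity p (fact ((m + 1) * n) :: nat) + multiplicity p (fact m :: nat)"
    using multiplicity_fact_eq_sum_div[OF p, of "(m + 1) * n" N] multiplicity_fact_eq_sum_div[OF p, of m N]
    by (simp add: N_def sum.distrib)
  also have "\<dots> = multiplicity p (fact ((m + 1) * n) * fact m :: nat)"
    using p by (simp add: prime_elem_multiplicity_mult_distrib)
  finally show "multiplicity p (fact n ^ m * fact (m + n) :: nat)
                  \<le> multiplicity p (fact ((m + 1) * n) * fact m :: nat)" .
qed

lemma fact_add_eq_fact_mult_prod: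
  "fact (m + n) = (fact n * (\<Prod>i=1..m. of_nat (n + i)) :: 'a::{comm_semiring_1, semiring_char_0})"
proof (induction m)
  case 0
  then show ?case by simp
next
  case (Suc m)
  have "(\<Prod>i=1..Suc m. of_nat (n + i) :: 'a) = (\<Prod>i=1..m. of_nat (n + i)) * of_nat (Suc (m + n))"
    by (simp add: prod.nat_ivl_Suc' add_ac)
  with Suc show ?case by (simp only: fact_Suc add_Suc mult_ac)
qed

lemma gen_catalan_eq_fact_quotient:
  "gen_catalan m n = of_nat (fact ((m + 1) * n) * fact m) / of_nat (fact n ^ m * fact (m + n))"
  unfolding gen_catalan_def fact_add_eq_fact_mult_prod[of m n]
  by (simp add: prod_dividef field_simps)

theorem mainTheorem9:
  fixes m n :: nat
  assumes "m \<ge> 1"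
  shows "gen_catalan m n \<in> \<int>"
proof -
  obtain c where "fact ((m + 1) * n) * fact m = (fact n ^ m * fact (m + n) :: nat) * c"
    using fact_pow_mult_fact_dvd[of n m] ..
  then have "gen_catalan m n = of_nat c"
    by (simp add: gen_catalan_eq_fact_quotient)
  then show ?thesis by simp
qed

end
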